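(* Fix a flow monoid $\mathbb{M}$. The set $\mathit{FG}$ of all flow graphs over $\mathbb{M}$, with the partial composition $*$, forms a separation algebra with unit set $\{h_\emptyset\}$, where $h_\emptyset=(\emptyset,\emptyset,\emptyset)$. That is, $*$ is commutative ($h_1\# h_2$ iff $h_2\# h_1$, and then $h_1*h_2=h_2*h_1$), associative ($h_2\# h_3$ and $h_1\#(h_2*h_3)$ hold iff $h_1\# h_2$ and $(h_1*h_2)\# h_3$ hold, and then $h_1*(h_2*h_3)=(h_1*h_2)*h_3$), and $h_\emptyset\# h$ with $h_\emptyset * h=h$ for every flow graph $h$.
   Context: A flow monoid is a commutative monoid $(\mathbb{M},+,0)$ such that the relation $n\le m :\iff \exists o.\ m=n+o$ is a partial order in which every ascending chain $K$ has a least upper bound $\bigsqcup K$, and $n+\bigsqcup K=\bigsqcup(n+K)$. A function $f:\mathbb{M}\to\mathbb{M}$ is continuous if it commutes with least upper bounds of ascending chains; $\mathcal{C}(\mathbb{M}\to\mathbb{M})$ is the set of continuous functions. Infinite sums denote least upper bounds of the ascending chain of finite partial sums; empty sums are $0$. A flow graph is a tuple $h=(X,E,\mathit{in})$ with $X\subseteq\mathbb{N}$ finite, edges $E:X\times\mathbb{N}\to\mathcal{C}(\mathbb{M}\to\mathbb{M})$, and inflow $\mathit{in}:(\mathbb{N}\setminus X)\times X\to\mathbb{M}$. Write $\mathit{in}_x=\sum_{y\in\mathbb{N}\setminus X}\mathit{in}(y,x)$. The flow $h.\mathit{flow}:X\to\mathbb{M}$ is the least function satisfying $\mathit{flow}(x)=\mathit{in}_x+\sum_{y\in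 X}E(y,x)(\mathit{flow}(y))$ for all $x\in X$. The outflow is $h.\mathit{out}:X\times(\mathbb{N}\setminus X)\to\mathbb{M}$, $h.\mathit{out}(x,y)=E(x,y)(h.\mathit{flow}(x))$. Composition: for $h_i=(X_i,E_i,\mathit{in}_i)$, write $h_1\#\#h_2$ if $X_1\cap X_2=\emptyset$ and for all $x\in X_1,y\in X_2$: $h_1.\mathit{out}(x,y)=\mathit{in}_2(x,y)$ and $h_2.\mathit{out}(y,x)=\mathit{in}_1(y,x)$. Then $h_1\uplus h_2=(X_1\uplus X_2,E_1\uplus E_2,(\mathit{in}_1\uplus\mathit{in}_2)|_{(\mathbb{N}\setminus(X_1\uplus X_2))\times(X_1\uplus X_2)})$. Composition is defined, written $h_1\# h_2$, iff $h_1\#\#h_2$ and $h_1.\mathit{flow}\uplus h_2.\mathit{flow}=(h_1\uplus h_2).\mathit{flow}$; in that case $h_1*h_2=h_1\uplus h_2$. *)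

theory Defs
  imports Main
begin

definition fm_le :: "'m::comm_monoid_add \<Rightarrow> 'm \<Rightarrow> bool" where
  "fm_le n m \<longleftrightarrow> (\<exists>k. m = n + k)"

definition fm_chain :: "(nat \<Rightarrow> 'm::comm_monoid_add) \<Rightarrow> bool" where
  "fm_chain K \<longleftrightarrow> (\<forall>i. fm_le (K i) (K (Suc i)))"

definition fm_is_lub :: "(nat \<Rightarrow> 'm::comm_monoid_add) \<Rightarrow> 'm \<Rightarrow> bool" where
  "fm_is_lub K l \<longleftrightarrow> (\<forall>i. fm_le (K i) l) \<and> (\<forall>u. (\<forall>i. fm_le (K i) u) \<longrightarrow> fm_le l u)"

definition fm_Lub :: "(nat \<Rightarrow> 'm::comm_monoid_add) \<Rightarrow> 'm" where
  "fm_Lub K = (THE l. fm_is_lub K l)"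

definition flow_monoid :: "'m::comm_monoid_add itself \<Rightarrow> bool" where
  "flow_monoid _ \<longleftrightarrow>
     (\<forall>a b::'m. fm_le a b \<longrightarrow> fm_le b a \<longrightarrow> a = b)
   \<and> (\<forall>K::nat \<Rightarrow> 'm. fm_chain K \<longrightarrow> (\<exists>l. fm_is_lub K l))
   \<and> (\<forall>(K::nat \<Rightarrow> 'm) n. fm_chain K \<longrightarrow> n + fm_Lub K = fm_Lub (\<lambda>i. n + K i))"

definition fm_continuous :: "('m::comm_monoid_add \<Rightarrow> 'm) \<Rightarrow> bool" where
  "fm_continuous f \<longleftrightarrow> (\<forall>K. fm_chain K \<longrightarrow> fm_is_lub (\<lambda>i. f (K i)) (f (fm_Lub K)))"

text \<open>A flow graph (X, E, in). Partial functions are represented as total functions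
  that are undefined outside their domain (extensional representation).\<close>
record 'm flow_graph =
  nodes :: "nat set"
  edge :: "nat \<Rightarrow> nat \<Rightarrow> 'm \<Rightarrow> 'm"
  inf :: "nat \<Rightarrow> nat \<Rightarrow> 'm"

definition FG :: "'m::comm_monoid_add flow_graph set" where
  "FG = {h. finite (nodes h)
          \<and> (\<forall>x\<in>nodes h. \<forall>y. fm_continuous (edge h x y))
          \<and> (\<forall>x y. x \<notin> nodes h \<longrightarrow> edge h x y = undefined)
          \<and> (\<forall>y x. \<not> (y \<notin> nodes h \<and> x \<in> nodes h) \<longrightarrow> inf h y x = undefined)}"

text \<open>in_x = sum over y in N - X of in(y,x): the lub of the chain of partial sums.\<close>
definition inflow :: "'m::comm_monoid_add flow_graph \<Rightarrow> nat \<Rightarrow> 'm" where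
  "inflow h x = fm_Lub (\<lambda>n. \<Sum>y\<in>{..<n} - nodes h. inf h y x)"

definition flow_eqs :: "'m::comm_monoid_add flow_graph \<Rightarrow> (nat \<Rightarrow> 'm) \<Rightarrow> bool" where
  "flow_eqs h f \<longleftrightarrow> (\<forall>x\<in>nodes h. f x = inflow h x + (\<Sum>y\<in>nodes h. edge h y x (f y)))"

definition flow :: "'m::comm_monoid_add flow_graph \<Rightarrow> nat \<Rightarrow> 'm" where
  "flow h = (THE f. (\<forall>x. x \<notin> nodes h \<longrightarrow> f x = undefined) \<and> flow_eqs h f
                 \<and> (\<forall>g. flow_eqs h g \<longrightarrow> (\<forall>x\<in>nodes h. fm_le (f x) (g x))))"

definition outf :: "'m::comm_monoid_add flow_graph \<Rightarrow> nat \<Rightarrow> nat \<Rightarrow> 'm" where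
  "outf h x y = (if x \<in> nodes h \<and> y \<notin> nodes h then edge h x y (flow h x) else undefined)"

definition fg_compat :: "'m::comm_monoid_add flow_graph \<Rightarrow> 'm flow_graph \<Rightarrow> bool" (infix "##" 50) where
  "h1 ## h2 \<longleftrightarrow> nodes h1 \<inter> nodes h2 = {}
     \<and> (\<forall>x\<in>nodes h1. \<forall>y\<in>nodes h2. outf h1 x y = inf h2 x y \<and> outf h2 y x = inf h1 y x)"

definition fg_union :: "'m::comm_monoid_add flow_graph \<Rightarrow> 'm flow_graph \<Rightarrow> 'm flow_graph" where
  "fg_union h1 h2 =
     \<lparr> nodes = nodes h1 \<union> nodes h2,
       edge = (\<lambda>x y. if x \<in> nodes h1 then edge h1 x y else edge h2 x y),
       inf = (\<lambda>y x. if y \<notin> nodes h1 \<union> nodes h2 \<and> x \<in> nodes h1 \<union> nodes h2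
                    then (if x \<in> nodes h1 then inf h1 y x else inf h2 y x)
                    else undefined) \<rparr>"

definition fun_union :: "nat set \<Rightarrow> (nat \<Rightarrow> 'a) \<Rightarrow> (nat \<Rightarrow> 'a) \<Rightarrow> nat \<Rightarrow> 'a" where
  "fun_union X f g = (\<lambda>x. if x \<in> X then f x else g x)"

definition fg_defined :: "'m::comm_monoid_add flow_graph \<Rightarrow> 'm flow_graph \<Rightarrow> bool" (infix "#" 50) where
  "h1 # h2 \<longleftrightarrow> h1 ## h2 \<and> fun_union (nodes h1) (flow h1) (flow h2) = flow (fg_union h1 h2)"

definition fg_comp :: "'m::comm_monoid_add flow_graph \<Rightarrow> 'm flow_graph \<Rightarrow> 'm flow_graph" (infixl "\<star>" 70) where
  "h1 \<star> h2 = fg_union h1 h2"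

definition fg_empty :: "'m::comm_monoid_add flow_graph" where
  "fg_empty = \<lparr> nodes = {}, edge = (\<lambda>_ _. undefined), inf = (\<lambda>_ _. undefined) \<rparr>"

end

theory Submission
  imports Defs
begin

text \<open>Since edge functions are continuous, the flow of a graph is the least pre-fixed point of its
  flow equations and is reached by Kleene iteration. The heart of the argument is a restriction
  principle: if a subgraph receives from the rest of a larger graph exactly what the rest sends under
  the larger flow, then the subgraph's flow is the restriction of the larger flow. Indeed the
  restricted larger flow is a pre-fixed point of the subgraph's equations, and conversely patching
  the subgraph's flow into the larger flow gives a pre-fixed point of the larger equations.
  Commutativity of composition is bookkeeping; one direction of associativity follows from the
  restriction principle applied to \<open>h1 \<star> h2\<close> inside \<open>h1 \<star> (h2 \<star> h3)\<close>, and the other direction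
  from the first one by commutativity.\<close>

lemma fm_le_refl: "fm_le a a"
  unfolding fm_le_def by (rule exI[of _ 0]) simp

lemma fm_le_trans: "fm_le a b \<Longrightarrow> fm_le b c \<Longrightarrow> fm_le a c"
  unfolding fm_le_def by (metis add.assoc)

lemma fm_le_add: "fm_le a (a + b)"
  unfolding fm_le_def by blast

lemma fm_le_zero: "fm_le 0 a"
  unfolding fm_le_def by simp

lemma fm_le_add_mono: "fm_le a b \<Longrightarrow> fm_le c d \<Longrightarrow> fm_le (a + c) (b + d)"
  unfolding fm_le_def by (metis add.assoc add.commute)

lemma fm_le_sum_mono: "(\<And>i. i \<in> A \<Longrightarrow> fm_le (f i) (g i)) \<Longrightarrow> fm_le (sum f A) (sum g A)"
  by (induction A rule: infinite_finite_induct) (simp_all add: fm_le_refl fm_le_add_mono)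

lemma fm_chain_mono: "fm_chain K \<Longrightarrow> i \<le> j \<Longrightarrow> fm_le (K i) (K j)"
  by (induction j) (auto simp: fm_chain_def le_Suc_eq fm_le_refl dest: fm_le_trans)

lemma fm_chain_add: "fm_chain a \<Longrightarrow> fm_chain b \<Longrightarrow> fm_chain (\<lambda>i. a i + b i)"
  unfolding fm_chain_def by (simp add: fm_le_add_mono)

lemma fm_chain_sum: "(\<And>y. y \<in> A \<Longrightarrow> fm_chain (K y)) \<Longrightarrow> fm_chain (\<lambda>i. \<Sum>y\<in>A. K y i)"
  unfolding fm_chain_def by (simp add: fm_le_sum_mono)

lemma fm_chain_partial_sums: "fm_chain (\<lambda>n. \<Sum>y\<in>{..<n} - A. g y)"
  unfolding fm_chain_def
proof
  fix n
  show "fm_le (\<Sum>y\<in>{..<n} - A. g y) (\<Sum>y\<in>{..<Suc n} - A. g y)"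
  proof (cases "n \<in> A")
    case True
    then have "{..<Suc n} - A = {..<n} - A" by (auto simp: less_Suc_eq)
    then show ?thesis by (simp add: fm_le_refl)
  next
    case False
    then have "{..<Suc n} - A = insert n ({..<n} - A)" by auto
    then show ?thesis using False by (simp add: add.commute[of "g n"] fm_le_add)
  qed
qed

section \<open>Flow equations on a finite set of nodes\<close>

definition flow_prefp ::
    "nat set \<Rightarrow> (nat \<Rightarrow> nat \<Rightarrow> 'm::comm_monoid_add \<Rightarrow> 'm) \<Rightarrow> (nat \<Rightarrow> 'm) \<Rightarrow> (nat \<Rightarrow> 'm) \<Rightarrow> bool" where
  "flow_prefp X E \<iota> k \<longleftrightarrow> (\<forall>x\<in>X. fm_le (\<iota> x + (\<Sum>y\<in>X. E y x (k y))) (k x))"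

text \<open>Leastness is required among all pre-fixed points, not only among solutions as in the
  definition of \<open>flow\<close>: the restriction argument only ever produces pre-fixed points.\<close>
definition flow_lfp ::
    "nat set \<Rightarrow> (nat \<Rightarrow> nat \<Rightarrow> 'm::comm_monoid_add \<Rightarrow> 'm) \<Rightarrow> (nat \<Rightarrow> 'm) \<Rightarrow> (nat \<Rightarrow> 'm) \<Rightarrow> bool" where
  "flow_lfp X E \<iota> f \<longleftrightarrow> (\<forall>x\<in>X. f x = \<iota> x + (\<Sum>y\<in>X. E y x (f y)))
                      \<and> (\<forall>k. flow_prefp X E \<iota> k \<longrightarrow> (\<forall>x\<in>X. fm_le (f x) (k x)))"

lemma flow_lfp_cong: "flow_lfp X E \<iota> f \<Longrightarrow> (\<And>x. x \<in> X \<Longrightarrow> g x = f x) \<Longrightarrow> flow_lfp X E \<iota> g"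
  unfolding flow_lfp_def by (metis (no_types, lifting) sum.cong)

lemma flow_lfp_le: "flow_lfp X E \<iota> f \<Longrightarrow> flow_prefp X E \<iota> k \<Longrightarrow> x \<in> X \<Longrightarrow> fm_le (f x) (k x)"
  unfolding flow_lfp_def by blast

lemma flow_prefp_if_solution:
  "\<forall>x\<in>X. k x = \<iota> x + (\<Sum>y\<in>X. E y x (k y)) \<Longrightarrow> flow_prefp X E \<iota> k"
  unfolding flow_prefp_def by (simp add: fm_le_refl)

lemma flow_equations_restrict:
  assumes fin: "finite X" and S: "S \<subseteq> X" and x: "x \<in> S"
    and E': "\<And>y. y \<in> S \<Longrightarrow> E' y = E y"
    and \<iota>': "\<iota>' x = \<iota> x + (\<Sum>y\<in>X - S. E y x (f y))"
    and k: "\<forall>y\<in>X - S. k y = f y"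
  shows "\<iota> x + (\<Sum>y\<in>X. E y x (k y)) = \<iota>' x + (\<Sum>y\<in>S. E' y x (k y))"
proof -
  have "(\<Sum>y\<in>X. E y x (k y)) = (\<Sum>y\<in>X - S. E y x (k y)) + (\<Sum>y\<in>S. E y x (k y))"
    by (rule sum.subset_diff[OF S fin])
  also have "\<dots> = (\<Sum>y\<in>X - S. E y x (f y)) + (\<Sum>y\<in>S. E' y x (k y))"
    using k E' by (intro arg_cong2[where f="(+)"] sum.cong) auto
  finally show ?thesis using \<iota>' by (simp add: add.assoc)
qed

lemma flow_lfp_restrict_le:
  assumes fin: "finite X" and S: "S \<subseteq> X"
    and f: "flow_lfp X E \<iota> f" and g: "flow_lfp S E' \<iota>' g"
    and E': "\<And>y. y \<in> S \<Longrightarrow> E' y = E y"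
    and \<iota>': "\<And>x. x \<in> S \<Longrightarrow> \<iota>' x = \<iota> x + (\<Sum>y\<in>X - S. E y x (f y))"
    and x: "x \<in> S"
  shows "fm_le (g x) (f x)"
proof (rule flow_lfp_le[OF g _ x])
  show "flow_prefp S E' \<iota>' f"
    unfolding flow_prefp_def
  proof
    fix x assume x: "x \<in> S"
    have "\<iota>' x + (\<Sum>y\<in>S. E' y x (f y)) = \<iota> x + (\<Sum>y\<in>X. E y x (f y))"
      by (rule flow_equations_restrict[where k = f, symmetric]) (use fin S x E' \<iota>' in auto)
    also have "\<dots> = f x"
      using f x S unfolding flow_lfp_def by auto
    finally show "fm_le (\<iota>' x + (\<Sum>y\<in>S. E' y x (f y))) (f x)"
      by (simp add: fm_le_refl)
  qed
qed

primrec kleene_iter ::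
    "nat set \<Rightarrow> (nat \<Rightarrow> nat \<Rightarrow> 'm::comm_monoid_add \<Rightarrow> 'm) \<Rightarrow> (nat \<Rightarrow> 'm) \<Rightarrow> nat \<Rightarrow> nat \<Rightarrow> 'm" where
  "kleene_iter X E \<iota> 0 = (\<lambda>x. 0)"
| "kleene_iter X E \<iota> (Suc n) = (\<lambda>x. \<iota> x + (\<Sum>y\<in>X. E y x (kleene_iter X E \<iota> n y)))"

lemma FG_finite: "h \<in> FG \<Longrightarrow> finite (nodes h)"
  unfolding FG_def by blast

lemma FG_continuous: "h \<in> FG \<Longrightarrow> x \<in> nodes h \<Longrightarrow> fm_continuous (edge h x y)"
  unfolding FG_def by blast

lemma FG_edge_undefined: "h \<in> FG \<Longrightarrow> x \<notin> nodes h \<Longrightarrow> edge h x y = undefined"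
  unfolding FG_def by blast

lemma FG_inf_undefined: "h \<in> FG \<Longrightarrow> \<not> (y \<notin> nodes h \<and> x \<in> nodes h) \<Longrightarrow> inf h y x = undefined"
  unfolding FG_def by blast

lemma nodes_fg_union [simp]: "nodes (fg_union h1 h2) = nodes h1 \<union> nodes h2"
  by (simp add: fg_union_def)

lemma edge_fg_union [simp]:
  "edge (fg_union h1 h2) x y = (if x \<in> nodes h1 then edge h1 x y else edge h2 x y)"
  by (simp add: fg_union_def)

lemma inf_fg_union [simp]:
  "inf (fg_union h1 h2) y x =
    (if y \<notin> nodes h1 \<union> nodes h2 \<and> x \<in> nodes h1 \<union> nodes h2
     then (if x \<in> nodes h1 then inf h1 y x else inf h2 y x) else undefined)"
  by (simp add: fg_union_def)

lemma fg_union_FG: "h1 \<in> FG \<Longrightarrow> h2 \<in> FG \<Longrightarrow> fg_union h1 h2 \<in> FG"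
  unfolding FG_def by auto

lemma fg_empty_FG: "fg_empty \<in> FG"
  unfolding FG_def fg_empty_def by simp

lemma flow_graph_eqI:
  fixes h h' :: "'m flow_graph"
  shows "nodes h = nodes h' \<Longrightarrow> edge h = edge h' \<Longrightarrow> inf h = inf h' \<Longrightarrow> h = h'"
  by (cases h, cases h') simp

lemma fg_union_empty: "h \<in> FG \<Longrightarrow> fg_union fg_empty h = h"
  by (rule flow_graph_eqI) (auto simp: fg_empty_def fun_eq_iff intro: FG_inf_undefined[symmetric])

lemma fg_union_assoc: "fg_union h1 (fg_union h2 h3) = fg_union (fg_union h1 h2) h3"
  by (rule flow_graph_eqI) (auto simp: fun_eq_iff)

lemma fg_union_commute:
  "h1 \<in> FG \<Longrightarrow> h2 \<in> FG \<Longrightarrow> nodes h1 \<inter> nodes h2 = {} \<Longrightarrow> fg_union h1 h2 = fg_union h2 h1"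
  by (rule flow_graph_eqI) (auto simp: fun_eq_iff FG_edge_undefined)

lemma fg_compat_commute: "h1 ## h2 \<longleftrightarrow> h2 ## h1"
  unfolding fg_compat_def by blast

lemma fg_defined_disjoint: "h1 # h2 \<Longrightarrow> nodes h1 \<inter> nodes h2 = {}"
  unfolding fg_defined_def fg_compat_def by blast

lemma flow_fg_union_if_defined:
  "h1 # h2 \<Longrightarrow> flow (fg_union h1 h2) x = (if x \<in> nodes h1 then flow h1 x else flow h2 x)"
  unfolding fg_defined_def by (metis fun_union_def)

lemma outf_fg_union:
  assumes "h1 # h2" and "x \<in> nodes h1 \<union> nodes h2" and "y \<notin> nodes h1 \<union> nodes h2"
  shows "outf (fg_union h1 h2) x y = (if x \<in> nodes h1 then outf h1 x y else outf h2 x y)"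
  using assms by (auto simp: outf_def flow_fg_union_if_defined)

lemma fg_compat_fg_union_right:
  assumes d23: "h2 # h3" and c: "h1 ## fg_union h2 h3"
  shows "h1 ## h2" and "h1 ## h3"
proof -
  have disj: "nodes h1 \<inter> nodes h2 = {}" "nodes h1 \<inter> nodes h3 = {}" "nodes h2 \<inter> nodes h3 = {}"
    using c fg_defined_disjoint[OF d23] unfolding fg_compat_def by auto
  have "outf h1 x y = inf h x y \<and> outf h y x = inf h1 y x"
    if "h = h2 \<or> h = h3" and "x \<in> nodes h1" and "y \<in> nodes h" for h x y
  proof -
    have "outf h1 x y = inf (fg_union h2 h3) x y" and "outf (fg_union h2 h3) y x = inf h1 y x"
      using c that unfolding fg_compat_def by auto
    then show ?thesis
      using outf_fg_union[OF d23, of y x] that disj by (auto simp: disjoint_iff)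
  qed
  then show "h1 ## h2" and "h1 ## h3"
    using disj unfolding fg_compat_def by blast+
qed

lemma fg_compat_fg_union_left:
  assumes d12: "h1 # h2" and c13: "h1 ## h3" and c23: "h2 ## h3"
  shows "fg_union h1 h2 ## h3"
  using outf_fg_union[OF d12] c13 c23 fg_defined_disjoint[OF d12]
  unfolding fg_compat_def by (auto simp: disjoint_iff)

lemma fg_comp_commute: "h1 \<in> FG \<Longrightarrow> h2 \<in> FG \<Longrightarrow> h1 # h2 \<Longrightarrow> h1 \<star> h2 = h2 \<star> h1"
  unfolding fg_comp_def by (rule fg_union_commute) (auto dest: fg_defined_disjoint)

lemma fg_empty_defined:
  assumes "h \<in> FG"
  shows "fg_empty # h"
  unfolding fg_defined_def fg_compat_def fg_union_empty[OF assms]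
  by (simp add: fg_empty_def fun_union_def)

section \<open>Least upper bounds in a flow monoid\<close>

context
  assumes fm: "flow_monoid TYPE('m::comm_monoid_add)"
begin

lemma fm_le_antisym: "fm_le (a::'m) b \<Longrightarrow> fm_le b a \<Longrightarrow> a = b"
  using fm unfolding flow_monoid_def by blast

lemma fm_Lub_eqI: "fm_is_lub (K::nat \<Rightarrow> 'm) l \<Longrightarrow> fm_Lub K = l"
  unfolding fm_Lub_def by (rule the_equality) (auto simp: fm_is_lub_def intro: fm_le_antisym)

lemma fm_is_lub_Lub: "fm_chain (K::nat \<Rightarrow> 'm) \<Longrightarrow> fm_is_lub K (fm_Lub K)"
  using fm fm_Lub_eqI unfolding flow_monoid_def by metis

lemma fm_Lub_upper: "fm_chain (K::nat \<Rightarrow> 'm) \<Longrightarrow> fm_le (K i) (fm_Lub K)"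
  using fm_is_lub_Lub unfolding fm_is_lub_def by blast

lemma fm_Lub_least: "fm_chain (K::nat \<Rightarrow> 'm) \<Longrightarrow> (\<And>i. fm_le (K i) u) \<Longrightarrow> fm_le (fm_Lub K) u"
  using fm_is_lub_Lub unfolding fm_is_lub_def by blast

lemma fm_add_Lub: "fm_chain (K::nat \<Rightarrow> 'm) \<Longrightarrow> n + fm_Lub K = fm_Lub (\<lambda>i. n + K i)"
  using fm unfolding flow_monoid_def by blast

lemma fm_Lub_const: "fm_Lub (\<lambda>i. c::'m) = c"
  by (rule fm_Lub_eqI) (auto simp: fm_is_lub_def fm_le_refl)

lemma fm_Lub_shift:
  assumes K: "fm_chain (K::nat \<Rightarrow> 'm)"
  shows "fm_Lub (\<lambda>i. K (i + N)) = fm_Lub K"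
proof (rule fm_Lub_eqI, unfold fm_is_lub_def, intro conjI allI impI)
  fix i show "fm_le (K (i + N)) (fm_Lub K)" by (rule fm_Lub_upper[OF K])
next
  fix u assume "\<forall>i. fm_le (K (i + N)) u"
  then have "fm_le (K i) u" for i
    using fm_chain_mono[OF K, of i "i + N"] fm_le_trans by auto
  then show "fm_le (fm_Lub K) u" by (rule fm_Lub_least[OF K])
qed

lemma fm_Lub_add:
  assumes a: "fm_chain (a::nat \<Rightarrow> 'm)" and b: "fm_chain b"
  shows "fm_Lub (\<lambda>i. a i + b i) = fm_Lub a + fm_Lub b"
proof (rule fm_Lub_eqI, unfold fm_is_lub_def, intro conjI allI impI)
  fix i show "fm_le (a i + b i) (fm_Lub a + fm_Lub b)"
    by (simp add: a b fm_le_add_mono fm_Lub_upper)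
next
  fix u assume u: "\<forall>i. fm_le (a i + b i) u"
  have const: "fm_chain (\<lambda>_. c)" for c :: 'm
    by (simp add: fm_chain_def fm_le_refl)
  have "fm_le (a i + b j) u" for i j
    using fm_le_add_mono[OF fm_chain_mono[OF a] fm_chain_mono[OF b]] u fm_le_trans
    by (metis max.cobounded1 max.cobounded2)
  then have "fm_le (a i + fm_Lub b) u" for i
    using fm_Lub_least[OF fm_chain_add[OF const b]] fm_add_Lub[OF b] by metis
  then have "fm_le (fm_Lub (\<lambda>i. fm_Lub b + a i)) u"
    by (intro fm_Lub_least fm_chain_add[OF const a]) (simp add: add.commute)
  then show "fm_le (fm_Lub a + fm_Lub b) u"
    using fm_add_Lub[OF a, of "fm_Lub b"] by (metis add.commute)
qed

lemma fm_Lub_sum: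
  fixes K :: "nat \<Rightarrow> nat \<Rightarrow> 'm"
  shows "finite A \<Longrightarrow> (\<And>y. y \<in> A \<Longrightarrow> fm_chain (K y)) \<Longrightarrow>
    fm_Lub (\<lambda>i. \<Sum>y\<in>A. K y i) = (\<Sum>y\<in>A. fm_Lub (K y))"
  by (induction A rule: finite_induct) (simp_all add: fm_Lub_const fm_Lub_add fm_chain_sum)

lemma fm_Lub_partial_sums_Diff:
  assumes B: "finite B" "B \<subseteq> A"
  shows "fm_Lub (\<lambda>n. \<Sum>y\<in>{..<n} - (A - B). g y :: 'm)
       = fm_Lub (\<lambda>n. \<Sum>y\<in>{..<n} - A. g y) + sum g B"
proof -
  obtain N where N: "B \<subseteq> {..<N}"
    using B(1) by (auto simp: finite_nat_set_iff_bounded)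
  have split: "(\<Sum>y\<in>{..<n + N} - (A - B). g y) = sum g B + (\<Sum>y\<in>{..<n + N} - A. g y)" for n
  proof -
    have "{..<n + N} - (A - B) = B \<union> ({..<n + N} - A)" and "B \<inter> ({..<n + N} - A) = {}"
      using N B(2) by auto
    then show ?thesis using B(1) by (simp add: sum.union_disjoint)
  qed
  have shifted: "fm_chain (\<lambda>n. \<Sum>y\<in>{..<n + N} - A. g y)"
    using fm_chain_partial_sums[of g A] unfolding fm_chain_def by simp
  have "fm_Lub (\<lambda>n. \<Sum>y\<in>{..<n} - (A - B). g y) = fm_Lub (\<lambda>n. \<Sum>y\<in>{..<n + N} - (A - B). g y)"
    by (rule fm_Lub_shift[OF fm_chain_partial_sums, symmetric])
  also have "\<dots> = sum g B + fm_Lub (\<lambda>n. \<Sum>y\<in>{..<n + N} - A. g y)"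
    by (simp only: split fm_add_Lub[OF shifted])
  also have "fm_Lub (\<lambda>n. \<Sum>y\<in>{..<n + N} - A. g y) = fm_Lub (\<lambda>n. \<Sum>y\<in>{..<n} - A. g y)"
    by (rule fm_Lub_shift[OF fm_chain_partial_sums])
  finally show ?thesis by (simp add: add.commute)
qed

lemma fm_continuous_mono: "fm_continuous (f::'m \<Rightarrow> 'm) \<Longrightarrow> fm_le a b \<Longrightarrow> fm_le (f a) (f b)"
proof -
  assume f: "fm_continuous f" and ab: "fm_le a b"
  define K where "K = (\<lambda>i::nat. if i = 0 then a else b)"
  have K: "fm_chain K" unfolding fm_chain_def K_def using ab by (auto simp: fm_le_refl)
  have "fm_is_lub K b" unfolding fm_is_lub_def K_def using ab by (auto simp: fm_le_refl)
  then have "fm_is_lub (\<lambda>i. f (K i)) (f b)"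
    using f K fm_Lub_eqI unfolding fm_continuous_def by metis
  then have "fm_le (f (K 0)) (f b)" unfolding fm_is_lub_def by blast
  then show ?thesis by (simp add: K_def)
qed

lemma fm_continuous_chain: "fm_continuous (f::'m \<Rightarrow> 'm) \<Longrightarrow> fm_chain K \<Longrightarrow> fm_chain (\<lambda>i. f (K i))"
  using fm_continuous_mono unfolding fm_chain_def by blast

lemma fm_continuous_Lub:
  "fm_continuous (f::'m \<Rightarrow> 'm) \<Longrightarrow> fm_chain K \<Longrightarrow> f (fm_Lub K) = fm_Lub (\<lambda>i. f (K i))"
  unfolding fm_continuous_def using fm_Lub_eqI by metis

section \<open>The least solution of the flow equations\<close>

lemma kleene_iter_chain:
  fixes E :: "nat \<Rightarrow> nat \<Rightarrow> 'm \<Rightarrow> 'm"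
  assumes cont: "\<And>y x. y \<in> X \<Longrightarrow> fm_continuous (E y x)"
  shows "fm_chain (\<lambda>n. kleene_iter X E \<iota> n x)"
proof -
  have "\<forall>x. fm_le (kleene_iter X E \<iota> n x) (kleene_iter X E \<iota> (Suc n) x)" for n
  proof (induction n)
    case 0
    show ?case by (simp add: fm_le_zero)
  next
    case (Suc n)
    show ?case
    proof
      fix x
      have "fm_le (\<Sum>y\<in>X. E y x (kleene_iter X E \<iota> n y)) (\<Sum>y\<in>X. E y x (kleene_iter X E \<iota> (Suc n) y))"
        using Suc by (intro fm_le_sum_mono) (rule fm_continuous_mono[OF cont], auto)
      then show "fm_le (kleene_iter X E \<iota> (Suc n) x) (kleene_iter X E \<iota> (Suc (Suc n)) x)"
        unfolding kleene_iter.simps by (rule fm_le_add_mono[OF fm_le_refl])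
    qed
  qed
  then show ?thesis unfolding fm_chain_def by blast
qed

lemma kleene_Lub_fixpoint:
  fixes E :: "nat \<Rightarrow> nat \<Rightarrow> 'm \<Rightarrow> 'm" and \<iota> :: "nat \<Rightarrow> 'm"
  assumes fin: "finite X" and cont: "\<And>y x. y \<in> X \<Longrightarrow> fm_continuous (E y x)"
  defines "L \<equiv> \<lambda>x. fm_Lub (\<lambda>n. kleene_iter X E \<iota> n x)"
  shows "L x = \<iota> x + (\<Sum>y\<in>X. E y x (L y))"
proof -
  let ?K = "\<lambda>y n. kleene_iter X E \<iota> n y"
  have chain: "fm_chain (?K y)" for y
    by (rule kleene_iter_chain[OF cont])
  have chains: "fm_chain (\<lambda>n. E y x (?K y n))" if "y \<in> X" for y
    by (rule fm_continuous_chain[OF cont[OF that] chain])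
  have "\<iota> x + (\<Sum>y\<in>X. E y x (L y)) = \<iota> x + (\<Sum>y\<in>X. fm_Lub (\<lambda>n. E y x (?K y n)))"
    by (intro arg_cong[where f="(+) (\<iota> x)"] sum.cong refl)
      (simp add: L_def fm_continuous_Lub[OF cont chain])
  also have "\<dots> = \<iota> x + fm_Lub (\<lambda>n. \<Sum>y\<in>X. E y x (?K y n))"
    by (simp only: fm_Lub_sum[OF fin chains])
  also have "\<dots> = fm_Lub (\<lambda>n. ?K x (Suc n))"
    by (simp add: fm_add_Lub[OF fm_chain_sum[OF chains]])
  also have "\<dots> = L x"
    unfolding L_def using fm_Lub_shift[OF chain, of 1] by simp
  finally show ?thesis by (rule sym)
qed

lemma kleene_Lub_least:
  fixes E :: "nat \<Rightarrow> nat \<Rightarrow> 'm \<Rightarrow> 'm"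
  assumes cont: "\<And>y x. y \<in> X \<Longrightarrow> fm_continuous (E y x)"
    and k: "flow_prefp X E \<iota> k" and x: "x \<in> X"
  shows "fm_le (fm_Lub (\<lambda>n. kleene_iter X E \<iota> n x)) (k x)"
proof -
  have below: "\<forall>x\<in>X. fm_le (kleene_iter X E \<iota> n x) (k x)" for n
  proof (induction n)
    case 0
    show ?case by (simp add: fm_le_zero)
  next
    case (Suc n)
    show ?case
    proof
      fix x assume x: "x \<in> X"
      have "fm_le (\<Sum>y\<in>X. E y x (kleene_iter X E \<iota> n y)) (\<Sum>y\<in>X. E y x (k y))"
        using Suc by (intro fm_le_sum_mono) (rule fm_continuous_mono[OF cont], auto)
      then have "fm_le (kleene_iter X E \<iota> (Suc n) x) (\<iota> x + (\<Sum>y\<in>X. E y x (k y)))"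
        unfolding kleene_iter.simps by (rule fm_le_add_mono[OF fm_le_refl])
      moreover have "fm_le (\<iota> x + (\<Sum>y\<in>X. E y x (k y))) (k x)"
        using k x unfolding flow_prefp_def by blast
      ultimately show "fm_le (kleene_iter X E \<iota> (Suc n) x) (k x)" by (rule fm_le_trans)
    qed
  qed
  show ?thesis
  proof (rule fm_Lub_least[OF kleene_iter_chain[OF cont]])
    fix n
    show "fm_le (kleene_iter X E \<iota> n x) (k x)" using below x by blast
  qed
qed

lemma flow_lfp_kleene:
  fixes E :: "nat \<Rightarrow> nat \<Rightarrow> 'm \<Rightarrow> 'm"
  assumes "finite X" and "\<And>y x. y \<in> X \<Longrightarrow> fm_continuous (E y x)"
  shows "flow_lfp X E \<iota> (\<lambda>x. fm_Lub (\<lambda>n. kleene_iter X E \<iota> n x))"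
  unfolding flow_lfp_def
  by (intro conjI ballI allI impI kleene_Lub_fixpoint[OF assms] kleene_Lub_least[OF assms(2)])

lemma flow_characterization:
  fixes h :: "'m flow_graph"
  assumes h: "h \<in> FG"
  shows "(\<forall>x. x \<notin> nodes h \<longrightarrow> flow h x = undefined)
       \<and> flow_lfp (nodes h) (edge h) (inflow h) (flow h)"
proof -
  define L where "L x = (if x \<in> nodes h then fm_Lub (\<lambda>n. kleene_iter (nodes h) (edge h) (inflow h) n x)
    else undefined)" for x
  have lfp: "flow_lfp (nodes h) (edge h) (inflow h) L"
    by (rule flow_lfp_cong[OF flow_lfp_kleene]) (use h FG_finite FG_continuous in \<open>auto simp: L_def\<close>)
  let ?P = "\<lambda>f. (\<forall>x. x \<notin> nodes h \<longrightarrow> f x = undefined) \<and> flow_eqs h f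
              \<and> (\<forall>g. flow_eqs h g \<longrightarrow> (\<forall>x\<in>nodes h. fm_le (f x) (g x)))"
  have "flow_eqs h L"
    using lfp unfolding flow_lfp_def flow_eqs_def by blast
  moreover have "fm_le (L x) (g x)" if "flow_eqs h g" and "x \<in> nodes h" for g x
    using flow_lfp_le[OF lfp flow_prefp_if_solution] that unfolding flow_eqs_def by blast
  ultimately have "?P L"
    by (simp add: L_def)
  moreover have "f = L" if "?P f" for f
  proof
    fix x
    show "f x = L x"
    proof (cases "x \<in> nodes h")
      case True
      have "fm_le (f x) (L x)" and "fm_le (L x) (f x)"
        using that \<open>?P L\<close> True by blast+
      then show ?thesis by (rule fm_le_antisym)
    qed (use that in \<open>simp add: L_def\<close>)
  qed
  ultimately have "flow h = L"
    unfolding flow_def by (rule the_equality)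
  then show ?thesis using lfp by (simp add: L_def)
qed

lemma flow_undefined: "(h :: 'm flow_graph) \<in> FG \<Longrightarrow> x \<notin> nodes h \<Longrightarrow> flow h x = undefined"
  using flow_characterization by blast

lemma flow_lfp_flow: "(h :: 'm flow_graph) \<in> FG \<Longrightarrow> flow_lfp (nodes h) (edge h) (inflow h) (flow h)"
  using flow_characterization by blast

lemma flow_lfp_restrict:
  fixes E E' :: "nat \<Rightarrow> nat \<Rightarrow> 'm \<Rightarrow> 'm"
  assumes fin: "finite X" and S: "S \<subseteq> X"
    and cont: "\<And>y x. y \<in> X \<Longrightarrow> fm_continuous (E y x)"
    and f: "flow_lfp X E \<iota> f" and g: "flow_lfp S E' \<iota>' g"
    and E': "\<And>y. y \<in> S \<Longrightarrow> E' y = E y"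
    and \<iota>': "\<And>x. x \<in> S \<Longrightarrow> \<iota>' x = \<iota> x + (\<Sum>y\<in>X - S. E y x (f y))"
    and x: "x \<in> S"
  shows "g x = f x"
proof -
  have g_le_f: "fm_le (g y) (f y)" if "y \<in> S" for y
    using flow_lfp_restrict_le[OF fin S f g] E' \<iota>' that by blast
  define k where "k y = (if y \<in> S then g y else f y)" for y
  have "flow_prefp X E \<iota> k"
    unfolding flow_prefp_def
  proof
    fix x assume "x \<in> X"
    show "fm_le (\<iota> x + (\<Sum>y\<in>X. E y x (k y))) (k x)"
    proof (cases "x \<in> S")
      case True
      have "\<iota> x + (\<Sum>y\<in>X. E y x (k y)) = \<iota>' x + (\<Sum>y\<in>S. E' y x (k y))"
        by (rule flow_equations_restrict[where k = k]) (use fin S True E' \<iota>' in \<open>auto simp: k_def\<close>)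
      also have "\<dots> = k x"
        using g True unfolding flow_lfp_def by (auto simp: k_def)
      finally show ?thesis by (simp add: fm_le_refl)
    next
      case False
      have "fm_le (\<iota> x + (\<Sum>y\<in>X. E y x (k y))) (\<iota> x + (\<Sum>y\<in>X. E y x (f y)))"
        using g_le_f by (intro fm_le_add_mono[OF fm_le_refl] fm_le_sum_mono)
          (rule fm_continuous_mono[OF cont], auto simp: k_def fm_le_refl)
      also have "\<iota> x + (\<Sum>y\<in>X. E y x (f y)) = k x"
        using f \<open>x \<in> X\<close> False unfolding flow_lfp_def by (auto simp: k_def)
      finally show ?thesis .
    qed
  qed
  then have "fm_le (f x) (g x)"
    using flow_lfp_le[OF f] x S by (force simp: k_def)
  with g_le_f[OF x] show ?thesis
    by (rule fm_le_antisym)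
qed

section \<open>Flows of composed graphs\<close>

lemma flow_fg_union_restrict:
  fixes ha hb :: "'m flow_graph"
  assumes ha: "ha \<in> FG" and hb: "hb \<in> FG" and disj: "nodes ha \<inter> nodes hb = {}"
    and inflow_from_hb:
      "\<And>x y. x \<in> nodes ha \<Longrightarrow> y \<in> nodes hb \<Longrightarrow> inf ha y x = edge hb y x (flow (fg_union ha hb) y)"
    and x: "x \<in> nodes ha"
  shows "flow ha x = flow (fg_union ha hb) x"
proof -
  let ?U = "fg_union ha hb"
  have U: "?U \<in> FG" using ha hb by (rule fg_union_FG)
  have rest: "nodes ?U - nodes ha = nodes hb" using disj by auto
  have "inflow ha x = inflow ?U x + (\<Sum>y\<in>nodes ?U - nodes ha. edge ?U y x (flow ?U y))"
    if x: "x \<in> nodes ha" for x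
  proof -
    have "inflow ha x = fm_Lub (\<lambda>n. \<Sum>y\<in>{..<n} - (nodes ?U - nodes hb). inf ha y x)"
      unfolding inflow_def using disj by (metis Diff_Un Un_Diff_cancel2 inf_commute Diff_Diff_Int
        Int_absorb1 nodes_fg_union Un_upper1 rest)
    also have "\<dots> = fm_Lub (\<lambda>n. \<Sum>y\<in>{..<n} - nodes ?U. inf ha y x) + (\<Sum>y\<in>nodes hb. inf ha y x)"
      by (rule fm_Lub_partial_sums_Diff) (use hb FG_finite in auto)
    also have "(\<lambda>n. \<Sum>y\<in>{..<n} - nodes ?U. inf ha y x) = (\<lambda>n. \<Sum>y\<in>{..<n} - nodes ?U. inf ?U y x)"
      using x by simp
    also have "(\<Sum>y\<in>nodes hb. inf ha y x) = (\<Sum>y\<in>nodes ?U - nodes ha. edge ?U y x (flow ?U y))"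
      unfolding rest using x disj inflow_from_hb by (intro sum.cong) auto
    finally show ?thesis unfolding inflow_def .
  qed
  then show ?thesis
    using flow_lfp_restrict[OF FG_finite[OF U] _ _ flow_lfp_flow[OF U] flow_lfp_flow[OF ha]] x
      FG_continuous[OF U]
    by (simp add: fun_eq_iff)
qed

lemma fg_defined_commute:
  fixes h1 h2 :: "'m flow_graph"
  assumes h1: "h1 \<in> FG" and h2: "h2 \<in> FG" and "h1 # h2"
  shows "h2 # h1"
proof -
  have disj: "nodes h1 \<inter> nodes h2 = {}"
    using \<open>h1 # h2\<close> by (rule fg_defined_disjoint)
  have "fun_union (nodes h2) (flow h2) (flow h1) = fun_union (nodes h1) (flow h1) (flow h2)"
    using disj by (auto simp: fun_union_def fun_eq_iff flow_undefined[OF h1] flow_undefined[OF h2])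
  then show ?thesis
    using \<open>h1 # h2\<close> fg_union_commute[OF h1 h2 disj]
    unfolding fg_defined_def by (simp add: fg_compat_commute)
qed

lemma fg_defined_reassoc_left:
  fixes h1 h2 h3 :: "'m flow_graph"
  assumes h1: "h1 \<in> FG" and h2: "h2 \<in> FG" and h3: "h3 \<in> FG"
    and d23: "h2 # h3" and d1_23: "h1 # fg_union h2 h3"
  shows "h1 # h2" and "fg_union h1 h2 # h3"
proof -
  let ?h12 = "fg_union h1 h2" and ?U = "fg_union h1 (fg_union h2 h3)"
  have c23: "h2 ## h3" and c1_23: "h1 ## fg_union h2 h3"
    using d23 d1_23 unfolding fg_defined_def by blast+
  have c12: "h1 ## h2" and c13: "h1 ## h3"
    using fg_compat_fg_union_right[OF d23 c1_23] by blast+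
  have disj: "nodes h1 \<inter> nodes h2 = {}" "nodes h1 \<inter> nodes h3 = {}" "nodes h2 \<inter> nodes h3 = {}"
    using c12 c13 c23 unfolding fg_compat_def by blast+
  have flow_U: "flow ?U x =
      (if x \<in> nodes h1 then flow h1 x else if x \<in> nodes h2 then flow h2 x else flow h3 x)" for x
    using flow_fg_union_if_defined[OF d1_23] flow_fg_union_if_defined[OF d23] by simp
  have flow_h12: "flow ?h12 x = flow ?U x" if "x \<in> nodes ?h12" for x
  proof -
    \<comment> \<open>\<open>h1 \<star> h2\<close> receives from \<open>h3\<close> exactly what \<open>h3\<close> sends under the flow of the whole graph.\<close>
    have "flow ?h12 x = flow (fg_union ?h12 h3) x"
    proof (rule flow_fg_union_restrict[OF fg_union_FG[OF h1 h2] h3 _ _ that])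
      show "nodes ?h12 \<inter> nodes h3 = {}"
        using disj by auto
      fix x y assume "x \<in> nodes ?h12" and "y \<in> nodes h3"
      then show "inf ?h12 y x = edge h3 y x (flow (fg_union ?h12 h3) y)"
        using c13 c23 disj unfolding fg_compat_def
        by (auto simp: outf_def flow_U fg_union_assoc[symmetric] disjoint_iff)
    qed
    then show ?thesis by (simp add: fg_union_assoc)
  qed
  have "fun_union (nodes h1) (flow h1) (flow h2) = flow ?h12"
  proof
    fix x
    show "fun_union (nodes h1) (flow h1) (flow h2) x = flow ?h12 x"
      using flow_h12[of x] flow_U[of x] flow_undefined[OF h2, of x]
        flow_undefined[OF fg_union_FG[OF h1 h2], of x]
      by (cases "x \<in> nodes h2") (auto simp: fun_union_def)
  qed
  then show d12: "h1 # h2"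
    unfolding fg_defined_def using c12 by simp
  have "fun_union (nodes ?h12) (flow ?h12) (flow h3) = flow (fg_union ?h12 h3)"
  proof
    fix x
    show "fun_union (nodes ?h12) (flow ?h12) (flow h3) x = flow (fg_union ?h12 h3) x"
      using flow_h12[of x] flow_U[of x] by (auto simp: fun_union_def fg_union_assoc)
  qed
  with fg_compat_fg_union_left[OF d12 c13 c23] show "fg_union h1 h2 # h3"
    unfolding fg_defined_def by blast
qed

lemma fg_defined_reassoc_right:
  fixes h1 h2 h3 :: "'m flow_graph"
  assumes h1: "h1 \<in> FG" and h2: "h2 \<in> FG" and h3: "h3 \<in> FG"
    and d12: "h1 # h2" and d12_3: "fg_union h1 h2 # h3"
  shows "h2 # h3" and "h1 # fg_union h2 h3"
proof -
  have "h3 # fg_union h2 h1"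
    using fg_defined_commute[OF fg_union_FG[OF h1 h2] h3 d12_3] fg_comp_commute[OF h1 h2 d12]
    by (simp add: fg_comp_def)
  then have d32: "h3 # h2" and d32_1: "fg_union h3 h2 # h1"
    using fg_defined_reassoc_left[OF h3 h2 h1 _] fg_defined_commute[OF h1 h2 d12] by blast+
  show "h2 # h3"
    using fg_defined_commute[OF h3 h2 d32] .
  have "h1 # fg_union h3 h2"
    using fg_defined_commute[OF fg_union_FG[OF h3 h2] h1 d32_1] .
  then show "h1 # fg_union h2 h3"
    using fg_comp_commute[OF h3 h2 d32] by (simp add: fg_comp_def)
qed

end

theorem lemma2:
  fixes h h1 h2 h3 :: "'m::comm_monoid_add flow_graph"
  assumes "flow_monoid TYPE('m)"
    and "h \<in> FG" and "h1 \<in> FG" and "h2 \<in> FG" and "h3 \<in> FG"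
  shows "(h1 # h2 \<longrightarrow> h1 \<star> h2 \<in> FG)
       \<and> (h1 # h2 \<longleftrightarrow> h2 # h1) \<and> (h1 # h2 \<longrightarrow> h1 \<star> h2 = h2 \<star> h1)
       \<and> ((h2 # h3 \<and> h1 # (h2 \<star> h3)) \<longleftrightarrow> (h1 # h2 \<and> (h1 \<star> h2) # h3))
       \<and> (h2 # h3 \<and> h1 # (h2 \<star> h3) \<longrightarrow> h1 \<star> (h2 \<star> h3) = (h1 \<star> h2) \<star> h3)
       \<and> fg_empty \<in> FG \<and> fg_empty # h \<and> fg_empty \<star> h = h"
proof -
  note fm = assms(1) and FG = assms(3-5)
  have "h1 # h2 \<longleftrightarrow> h2 # h1"
    using fg_defined_commute[OF fm] FG by blast
  moreover have "(h2 # h3 \<and> h1 # (h2 \<star> h3)) \<longleftrightarrow> (h1 # h2 \<and> (h1 \<star> h2) # h3)"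
    using fg_defined_reassoc_left[OF fm FG] fg_defined_reassoc_right[OF fm FG]
    unfolding fg_comp_def by blast
  moreover have "h1 \<star> (h2 \<star> h3) = (h1 \<star> h2) \<star> h3"
    unfolding fg_comp_def by (rule fg_union_assoc)
  moreover have "h1 \<star> h2 \<in> FG"
    unfolding fg_comp_def using FG(1,2) by (rule fg_union_FG)
  moreover have "h1 # h2 \<longrightarrow> h1 \<star> h2 = h2 \<star> h1"
    using fg_comp_commute FG by blast
  ultimately show ?thesis
    using fg_empty_FG fg_empty_defined[OF assms(2)] fg_union_empty[OF assms(2)]
    unfolding fg_comp_def by blast
qed

end
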